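(* Let $n,k_1,k_2$ be nonnegative integers with $k_1+k_2\le n$ and $\ell=n-k_1-k_2$. Let $C$ be a $\mathbb{Z}_4$-code of length $n$ and type $4^{k_1}2^{k_2}$ which is inequivalent to the trivial extension of any $\mathbb{Z}_4$-code of length $n-1$ and type $4^{k_1}2^{k_2}$. Then there is a $\mathbb{Z}_4$-code $C'$ of length $n$ and type $4^{k_1}2^{k_2}$ with $C\cong C'$ having a generator matrix $G(A,B,D)\in\mathcal{V}$ such that the matrix $\begin{pmatrix}B\\2D\end{pmatrix}$ has no zero column.
   Context: $\mathbb{Z}_4=\{0,1,2,3\}$ is the ring of integers modulo $4$; a $\mathbb{Z}_4$-code of length $n$ is a submodule of $\mathbb{Z}_4^n$, and two codes are equivalent ($\cong$) if one is obtained from the other by permuting coordinates and changing the signs of some coordinates. A code has type $4^{k_1}2^{k_2}$ if it is permutation-equivalent to a code with generator matrix $G(A,B,D)=\begin{pmatrix} I_{k_1} & A & B\\ O & 2I_{k_2} & 2D\end{pmatrix}$ with $A$ a $k_1\times k_2$ $(0,1)$-matrix, $D$ a $k_2\times\ell$ $(0,1)$-matrix, $B$ a $k_1\times\ell$ $\mathbb{Z}_4$-matrix. The trivial extension of a code $C_0$ of length $n-1$ is $\{(c,0)\mid c\in C_0\}$. Order $\mathbb{Z}_4$ by $0<1<2<3$ and order vectors lexicographically. Let $M_{m\times n}(R)$ denote the set of $m\times n$ matrices with entries in $R$. For $T\subset M_{m\times n}(\mathbb{Z}_4)$ let $P_{row}(T)$ be the set of matrices in $T$ whose rows $a_1,\dots,a_m$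 satisfy $a_i\le a_j$ whenever $i\le j$, and $P_{col}(T)$ the set of matrices in $T$ whose columns $b_1,\dots,b_n$ satisfy $b_i^T\le b_j^T$ whenever $i\le j$. Let $\mathcal{S}=\{G(A,B,D)\mid A\in M_{k_1\times k_2}(\{0,1\}),\ B\in M_{k_1\times\ell}(\mathbb{Z}_4),\ D\in M_{k_2\times\ell}(\{0,1\})\}$, $\mathcal{T}=\{G(A,B,D)\in\mathcal{S}\mid A\in P_{row}(M_{k_1\times k_2}(\{0,1\}))\}$. Let $\mathcal{B}$ be the set consisting of all $k_1\times\ell$ matrices with entries in $\{0,2\}$ together with all $k_1\times\ell$ $\mathbb{Z}_4$-matrices $B$ such that, for the smallest $i$ for which the $i$-th row of $B$ contains an entry not in $\{0,2\}$, the $i$-th row of $B$ has all entries in $\{0,1,2\}$. Let $\mathcal{U}=\{G(A,B,D)\in\mathcal{T}\mid B\in\mathcal{B}\}$ and $\mathcal{V}=\{G(A,B,D)\in\mathcal{U}\mid \begin{pmatrix}B\\2D\end{pmatrix}\in P_{col}(M_{(k_1+k_2)\times\ell}(\mathbb{Z}_4))\}$. *)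

theory Defs
  imports Main "HOL-Library.Numeral_Type" "HOL-Combinatorics.Permutations"
begin

text \<open>Z4 is the library type 4 (integers modulo 4), ordered 0 < 1 < 2 < 3.
  A vector of length n is a function nat => Z4 vanishing outside {..<n};
  an m x n matrix is a function nat => nat => Z4 (only entries with row < m,
  column < n are relevant).\<close>

type_synonym z4 = "4"
type_synonym z4vec = "nat \<Rightarrow> z4"
type_synonym z4mat = "nat \<Rightarrow> nat \<Rightarrow> z4"

definition vecs :: "nat \<Rightarrow> z4vec set" where
  "vecs n = {v. \<forall>i\<ge>n. v i = 0}"

definition is_code :: "nat \<Rightarrow> z4vec set \<Rightarrow> bool" where
  "is_code n C \<longleftrightarrow> C \<subseteq> vecs n \<and> (\<lambda>_. 0) \<in> C
     \<and> (\<forall>u\<in>C. \<forall>v\<in>C. (\<lambda>i. u i + v i) \<in> C)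
     \<and> (\<forall>a::z4. \<forall>v\<in>C. (\<lambda>i. a * v i) \<in> C)"

definition gen_code :: "nat \<Rightarrow> nat \<Rightarrow> z4mat \<Rightarrow> z4vec set" where
  "gen_code r n M = {(\<lambda>j. if j < n then (\<Sum>i<r. c i * M i j) else 0) | c. True}"

definition perm_equiv :: "nat \<Rightarrow> z4vec set \<Rightarrow> z4vec set \<Rightarrow> bool" where
  "perm_equiv n C C' \<longleftrightarrow> (\<exists>\<sigma>. \<sigma> permutes {..<n} \<and> C' = (\<lambda>v. v \<circ> \<sigma>) ` C)"

definition code_equiv :: "nat \<Rightarrow> z4vec set \<Rightarrow> z4vec set \<Rightarrow> bool" where
  "code_equiv n C C' \<longleftrightarrow> (\<exists>\<sigma> s. \<sigma> permutes {..<n} \<and> (\<forall>i. s i = 1 \<or> s i = (-1::z4))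
      \<and> C' = (\<lambda>v. \<lambda>i. s i * v (\<sigma> i)) ` C)"

definition Gmat :: "nat \<Rightarrow> nat \<Rightarrow> z4mat \<Rightarrow> z4mat \<Rightarrow> z4mat \<Rightarrow> z4mat" where
  "Gmat k1 k2 A B D = (\<lambda>i j.
     if i < k1 then
       (if j < k1 then (if i = j then 1 else 0)
        else if j < k1 + k2 then A i (j - k1)
        else B i (j - k1 - k2))
     else
       (if j < k1 then 0
        else if j < k1 + k2 then (if j - k1 = i - k1 then 2 else 0)
        else 2 * D (i - k1) (j - k1 - k2)))"

definition mat_over :: "nat \<Rightarrow> nat \<Rightarrow> z4 set \<Rightarrow> z4mat \<Rightarrow> bool" where
  "mat_over m n S M \<longleftrightarrow> (\<forall>i<m. \<forall>j<n. M i j \<in> S)"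

definition in_S :: "nat \<Rightarrow> nat \<Rightarrow> nat \<Rightarrow> z4mat \<Rightarrow> z4mat \<Rightarrow> z4mat \<Rightarrow> bool" where
  "in_S k1 k2 l A B D \<longleftrightarrow> mat_over k1 k2 {0,1} A \<and> mat_over k2 l {0,1} D"

definition has_type :: "nat \<Rightarrow> nat \<Rightarrow> nat \<Rightarrow> z4vec set \<Rightarrow> bool" where
  "has_type n k1 k2 C \<longleftrightarrow> k1 + k2 \<le> n \<and>
     (\<exists>A B D. in_S k1 k2 (n - k1 - k2) A B D \<and>
        perm_equiv n (gen_code (k1 + k2) n (Gmat k1 k2 A B D)) C)"

definition trivial_ext :: "nat \<Rightarrow> z4vec set \<Rightarrow> z4vec set" where
  "trivial_ext n C0 = {c(n - 1 := 0) | c. c \<in> C0}"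

definition lex_le :: "nat \<Rightarrow> z4vec \<Rightarrow> z4vec \<Rightarrow> bool" where
  "lex_le m u v \<longleftrightarrow> (\<forall>t<m. u t = v t) \<or>
     (\<exists>j<m. (\<forall>t<j. u t = v t) \<and> u j < v j)"

definition P_row :: "nat \<Rightarrow> nat \<Rightarrow> z4mat \<Rightarrow> bool" where
  "P_row m n M \<longleftrightarrow> (\<forall>i<m. \<forall>j<m. i \<le> j \<longrightarrow> lex_le n (M i) (M j))"

definition P_col :: "nat \<Rightarrow> nat \<Rightarrow> z4mat \<Rightarrow> bool" where
  "P_col m n M \<longleftrightarrow> (\<forall>i<n. \<forall>j<n. i \<le> j \<longrightarrow> lex_le m (\<lambda>r. M r i) (\<lambda>r. M r j))"

definition in_Bset :: "nat \<Rightarrow> nat \<Rightarrow> z4mat \<Rightarrow> bool" where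
  "in_Bset k1 l B \<longleftrightarrow> mat_over k1 l {0,2} B \<or>
     (\<exists>i<k1. (\<forall>i'<i. \<forall>j<l. B i' j \<in> {0,2}) \<and> (\<exists>j<l. B i j \<notin> {0,2})
         \<and> (\<forall>j<l. B i j \<in> {0,1,2}))"

definition stackBD :: "nat \<Rightarrow> z4mat \<Rightarrow> z4mat \<Rightarrow> z4mat" where
  "stackBD k1 B D = (\<lambda>i j. if i < k1 then B i j else 2 * D (i - k1) j)"

definition in_T :: "nat \<Rightarrow> nat \<Rightarrow> nat \<Rightarrow> z4mat \<Rightarrow> z4mat \<Rightarrow> z4mat \<Rightarrow> bool" where
  "in_T k1 k2 l A B D \<longleftrightarrow> in_S k1 k2 l A B D \<and> P_row k1 k2 A"

definition in_U :: "nat \<Rightarrow> nat \<Rightarrow> nat \<Rightarrow> z4mat \<Rightarrow> z4mat \<Rightarrow> z4mat \<Rightarrow> bool" where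
  "in_U k1 k2 l A B D \<longleftrightarrow> in_T k1 k2 l A B D \<and> in_Bset k1 l B"

definition in_V :: "nat \<Rightarrow> nat \<Rightarrow> nat \<Rightarrow> z4mat \<Rightarrow> z4mat \<Rightarrow> z4mat \<Rightarrow> bool" where
  "in_V k1 k2 l A B D \<longleftrightarrow> in_U k1 k2 l A B D \<and> P_col (k1 + k2) l (stackBD k1 B D)"

end

theory Submission
  imports Defs "HOL-Library.List_Lexorder"
begin

text \<open>Sorting the first k1 rows (and the first k1 coordinates with them) puts A into
  P_row. Negating each of the last l coordinates in which the first row of B containing a unit
  has the entry 3 puts B into \<B>, and leaves 2D unchanged. Sorting the last l columns of
  (B; 2D) then gives P_col, and neither this nor the sign changes undo the earlier
  normalisations. Finally, a zero column of (B; 2D) could be moved to the last coordinate,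
  making C equivalent to a trivial extension.\<close>

lemma z4_cases: "(v::z4) = 0 \<or> v = 1 \<or> v = 2 \<or> v = 3"
proof (induct v)
  case (of_int z)
  then have "z = 0 \<or> z = 1 \<or> z = 2 \<or> z = 3" by auto
  then show ?case by auto
qed

lemma z4_sign_mult_double: "e = 1 \<or> e = -1 \<Longrightarrow> e * (2 * x) = 2 * (x::z4)"
  using z4_cases[of x] by auto

lemma z4_sign_mult_in_02_iff: "e = 1 \<or> e = -1 \<Longrightarrow> e * v \<in> {0,2} \<longleftrightarrow> (v::z4) \<in> {0,2}"
  using z4_cases[of v] by auto

lemma z4_sign_normalise: "(if (v::z4) = 3 then -1 else 1) * v \<in> {0,1,2}"
  using z4_cases[of v] by auto

lemma sorting_permutation_exists:
  fixes f :: "nat \<Rightarrow> 'a::linorder"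
  shows "\<exists>\<rho>. \<rho> permutes {..<l} \<and> (\<forall>i<l. \<forall>j<l. i \<le> j \<longrightarrow> f (\<rho> i) \<le> f (\<rho> j))"
proof -
  define ys where "ys = sort_key f [0..<l]"
  have "mset ys = mset [0..<l]" by (simp add: ys_def)
  then obtain p where p: "p permutes {..<length [0..<l]}" "permute_list p [0..<l] = ys"
    by (metis mset_eq_permutation)
  have ys_nth: "ys ! i = p i" if "i < l" for i
  proof -
    have "p i < l" using permutes_in_image[OF p(1)] that by simp
    then show ?thesis using p that by (auto simp: permute_list_nth)
  qed
  have "sorted (map f ys)" by (simp add: ys_def)
  then have "\<forall>i<l. \<forall>j<l. i \<le> j \<longrightarrow> f (ys ! i) \<le> f (ys ! j)"
    by (auto simp: sorted_iff_nth_mono ys_def)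
  then show ?thesis using p ys_nth by (intro exI[of _ p]) auto
qed

lemma lex_le_if_map_le:
  fixes u v :: z4vec
  assumes "map u [0..<m] \<le> map v [0..<m]"
  shows "lex_le m u v"
proof (cases "map u [0..<m] = map v [0..<m]")
  case True
  then show ?thesis by (auto simp: lex_le_def map_eq_conv)
next
  case False
  with assms have "(map u [0..<m], map v [0..<m]) \<in> lexord {(a,b). a < b}"
    unfolding list_le_def list_less_def by blast
  then obtain i where i: "i < m" "take i (map u [0..<m]) = take i (map v [0..<m])" "u i < v i"
    by (auto simp: lexord_take_index_conv)
  have "u t = v t" if "t < i" for t
    using arg_cong[OF i(2), of "\<lambda>xs. xs ! t"] that i(1) by simp
  then show ?thesis using i by (auto simp: lex_le_def)
qed

lemma permutes_shift:
  fixes k l :: nat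
  assumes \<rho>: "\<rho> permutes {..<l}"
  shows "(\<lambda>x. if k \<le> x \<and> x < k + l then k + \<rho> (x - k) else x) permutes {..<k + l}"
proof (rule bij_imp_permutes)
  let ?f = "\<lambda>x. if k \<le> x \<and> x < k + l then k + \<rho> (x - k) else x"
  let ?g = "\<lambda>x. if k \<le> x \<and> x < k + l then k + inv \<rho> (x - k) else x"
  have \<rho>_lt: "y < l \<Longrightarrow> \<rho> y < l" for y using permutes_in_image[OF \<rho>] by simp
  have inv_lt: "y < l \<Longrightarrow> inv \<rho> y < l" for y using permutes_in_image[OF permutes_inv[OF \<rho>]] by simp
  have offset_lt: "k \<le> a \<Longrightarrow> a < k + l \<Longrightarrow> a - k < l" for a by simp
  show "bij_betw ?f {..<k + l} {..<k + l}"
  proof (rule bij_betw_byWitness[where f' = ?g])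
    show "\<forall>a\<in>{..<k + l}. ?g (?f a) = a"
      using \<rho>_lt permutes_inverses(2)[OF \<rho>] by (auto dest: offset_lt)
    show "\<forall>a\<in>{..<k + l}. ?f (?g a) = a"
      using inv_lt permutes_inverses(1)[OF \<rho>] by (auto dest: offset_lt)
    show "?f ` {..<k + l} \<subseteq> {..<k + l}"
      using \<rho>_lt by (auto dest: offset_lt)
    show "?g ` {..<k + l} \<subseteq> {..<k + l}"
      using inv_lt by (auto dest: offset_lt)
  qed
qed auto

lemma is_code_gen_code: "is_code n (gen_code r n M)"
  unfolding is_code_def
proof (intro conjI ballI allI)
  show "gen_code r n M \<subseteq> vecs n" by (auto simp: gen_code_def vecs_def)
  show "(\<lambda>_. 0) \<in> gen_code r n M"
    unfolding gen_code_def by (rule CollectI, rule exI[of _ "\<lambda>_. 0"]) (auto simp: fun_eq_iff)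
next
  fix u v assume "u \<in> gen_code r n M" "v \<in> gen_code r n M"
  then obtain c d where "u = (\<lambda>j. if j < n then (\<Sum>i<r. c i * M i j) else 0)"
      "v = (\<lambda>j. if j < n then (\<Sum>i<r. d i * M i j) else 0)" by (auto simp: gen_code_def)
  then show "(\<lambda>i. u i + v i) \<in> gen_code r n M"
    unfolding gen_code_def
    by (intro CollectI exI[of _ "\<lambda>i. c i + d i"]) (auto simp: fun_eq_iff distrib_right sum.distrib)
next
  fix a :: z4 and v assume "v \<in> gen_code r n M"
  then obtain d where "v = (\<lambda>j. if j < n then (\<Sum>i<r. d i * M i j) else 0)"
    by (auto simp: gen_code_def)
  then show "(\<lambda>i. a * v i) \<in> gen_code r n M"
    unfolding gen_code_def
    by (intro CollectI exI[of _ "\<lambda>i. a * d i"]) (auto simp: fun_eq_iff sum_distrib_left mult.assoc)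
qed

lemma gen_code_cong:
  assumes "\<And>i x. i < r \<Longrightarrow> x < n \<Longrightarrow> M i x = M' i x"
  shows "gen_code r n M = gen_code r n M'"
proof -
  have "(\<lambda>x. if x < n then (\<Sum>i<r. c i * M i x) else 0)
      = (\<lambda>x. if x < n then (\<Sum>i<r. c i * M' i x) else 0)" for c
    using assms by (auto simp: fun_eq_iff intro!: sum.cong)
  then show ?thesis unfolding gen_code_def by simp
qed

lemma gen_code_pad_zero_columns:
  assumes "m \<le> n"
  shows "gen_code r m M = gen_code r n (\<lambda>i x. if x < m then M i x else 0)"
proof -
  have "(\<lambda>x. if x < m then (\<Sum>i<r. c i * M i x) else 0)
      = (\<lambda>x. if x < n then (\<Sum>i<r. c i * (if x < m then M i x else 0)) else 0)" for c
    using assms by (auto simp: fun_eq_iff)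
  then show ?thesis unfolding gen_code_def by simp
qed

lemma has_type_gen_code_Gmat:
  assumes "k1 + k2 \<le> n" "in_S k1 k2 (n - k1 - k2) A B D"
  shows "has_type n k1 k2 (gen_code (k1 + k2) n (Gmat k1 k2 A B D))"
  using assms unfolding has_type_def perm_equiv_def
  by (intro conjI exI[of _ A] exI[of _ B] exI[of _ D] exI[of _ id]) auto

lemma trivial_ext_code:
  assumes "is_code (n - 1) C0"
  shows "trivial_ext n C0 = C0"
proof -
  have "c(n - 1 := 0) = c" if "c \<in> C0" for c
    using assms that by (auto simp: is_code_def vecs_def fun_eq_iff)
  then have "{c(n - 1 := 0) | c. c \<in> C0} = {c | c. c \<in> C0}" by metis
  then show ?thesis unfolding trivial_ext_def by simp
qed

lemma perm_equiv_sym: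
  assumes "perm_equiv n C C'"
  shows "perm_equiv n C' C"
proof -
  obtain \<sigma> where \<sigma>: "\<sigma> permutes {..<n}" "C' = (\<lambda>v. v \<circ> \<sigma>) ` C"
    using assms by (auto simp: perm_equiv_def)
  have "(\<lambda>u. u \<circ> inv \<sigma>) ` C' = C"
    unfolding \<sigma>(2) image_image using permutes_inverses(1)[OF \<sigma>(1)] by (simp add: comp_def)
  then show ?thesis unfolding perm_equiv_def using permutes_inv[OF \<sigma>(1)] by blast
qed

lemma code_equiv_if_perm_equiv: "perm_equiv n C C' \<Longrightarrow> code_equiv n C C'"
  unfolding perm_equiv_def code_equiv_def
  by (elim exE conjE, intro exI[of _ "\<lambda>_. 1"] exI) (auto simp: comp_def)

lemma code_equiv_trans:
  assumes "code_equiv n C C'" "code_equiv n C' C''"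
  shows "code_equiv n C C''"
proof -
  obtain t1 s1 where 1: "t1 permutes {..<n}" "\<forall>i. s1 i = 1 \<or> s1 i = (-1::z4)"
    "C' = (\<lambda>v i. s1 i * v (t1 i)) ` C" using assms(1) by (auto simp: code_equiv_def)
  obtain t2 s2 where 2: "t2 permutes {..<n}" "\<forall>i. s2 i = 1 \<or> s2 i = (-1::z4)"
    "C'' = (\<lambda>v i. s2 i * v (t2 i)) ` C'" using assms(2) by (auto simp: code_equiv_def)
  have "C'' = (\<lambda>v i. (s2 i * s1 (t2 i)) * v ((t1 \<circ> t2) i)) ` C"
    unfolding 2(3) 1(3) image_image by (simp add: mult.assoc)
  moreover have "t1 \<circ> t2 permutes {..<n}" using 1 2 permutes_compose by blast
  moreover have "\<forall>i. s2 i * s1 (t2 i) = 1 \<or> s2 i * s1 (t2 i) = (-1::z4)"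
    using 1(2) 2(2) by (metis mult.right_neutral mult_minus1 mult_minus1_right minus_minus)
  ultimately show ?thesis unfolding code_equiv_def
    by (intro exI[of _ "t1 \<circ> t2"] exI[of _ "\<lambda>i. s2 i * s1 (t2 i)"]) simp
qed

lemma code_equiv_gen_code_signed_permute:
  assumes R: "R permutes {..<r}" and \<tau>: "\<tau> permutes {..<n}"
    and s: "\<forall>x. s x = 1 \<or> s x = -1"
    and M: "\<And>i x. i < r \<Longrightarrow> x < n \<Longrightarrow> M i x = s x * M0 (R i) (\<tau> x)"
  shows "code_equiv n (gen_code r n M0) (gen_code r n M)"
proof -
  have combination: "(\<lambda>x. s x * (if \<tau> x < n then (\<Sum>k<r. c k * M0 k (\<tau> x)) else 0))
      = (\<lambda>x. if x < n then (\<Sum>k<r. c (R k) * M k x) else 0)" for c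
  proof
    fix x
    show "s x * (if \<tau> x < n then (\<Sum>k<r. c k * M0 k (\<tau> x)) else 0)
      = (if x < n then (\<Sum>k<r. c (R k) * M k x) else 0)"
    proof (cases "x < n")
      case True
      then have "(\<Sum>k<r. c (R k) * M k x) = s x * (\<Sum>k<r. (\<lambda>k. c k * M0 k (\<tau> x)) (R k))"
        using M by (simp add: sum_distrib_left mult_ac)
      also have "\<dots> = s x * (\<Sum>k<r. c k * M0 k (\<tau> x))"
        using sum.permute[OF R, of "\<lambda>k. c k * M0 k (\<tau> x)"] by (simp add: comp_def)
      finally show ?thesis using True permutes_in_image[OF \<tau>] by simp
    next
      case False
      then have "\<tau> x = x" using \<tau> by (auto simp: permutes_def)
      then show ?thesis using False by simp
    qed
  qed
  have "gen_code r n M = (\<lambda>v x. s x * v (\<tau> x)) ` gen_code r n M0"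
  proof
    show "gen_code r n M \<subseteq> (\<lambda>v x. s x * v (\<tau> x)) ` gen_code r n M0"
    proof
      fix w assume "w \<in> gen_code r n M"
      then obtain c where w: "w = (\<lambda>x. if x < n then (\<Sum>k<r. c k * M k x) else 0)"
        by (auto simp: gen_code_def)
      have "(c \<circ> inv R) (R k) = c k" for k using permutes_inverses(2)[OF R] by simp
      then have "w = (\<lambda>x. s x * (if \<tau> x < n then (\<Sum>k<r. (c \<circ> inv R) k * M0 k (\<tau> x)) else 0))"
        unfolding combination w by presburger
      then show "w \<in> (\<lambda>v x. s x * v (\<tau> x)) ` gen_code r n M0"
        unfolding gen_code_def
        by (intro image_eqI[of _ _ "\<lambda>x. if x < n then (\<Sum>k<r. (c \<circ> inv R) k * M0 k x) else 0"]) auto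
    qed
    show "(\<lambda>v x. s x * v (\<tau> x)) ` gen_code r n M0 \<subseteq> gen_code r n M"
    proof
      fix w assume "w \<in> (\<lambda>v x. s x * v (\<tau> x)) ` gen_code r n M0"
      then obtain c where "w = (\<lambda>x. s x * (if \<tau> x < n then (\<Sum>k<r. c k * M0 k (\<tau> x)) else 0))"
        by (auto simp: gen_code_def)
      then show "w \<in> gen_code r n M"
        unfolding combination gen_code_def by (intro CollectI exI[of _ "\<lambda>k. c (R k)"]) simp
    qed
  qed
  then show ?thesis unfolding code_equiv_def using \<tau> s by blast
qed

lemma code_equiv_Gmat_reorder:
  fixes k1 k2 l n :: nat
  assumes n: "n = k1 + k2 + l" and \<pi>: "\<pi> permutes {..<k1}" and \<rho>: "\<rho> permutes {..<l}"
    and e: "\<forall>j. e j = 1 \<or> e j = -1"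
  shows "code_equiv n (gen_code (k1 + k2) n (Gmat k1 k2 A B D))
     (gen_code (k1 + k2) n
        (Gmat k1 k2 (\<lambda>i. A (\<pi> i)) (\<lambda>i j. e (\<rho> j) * B (\<pi> i) (\<rho> j)) (\<lambda>i j. D i (\<rho> j))))"
proof -
  define r where "r = k1 + k2"
  define sh where "sh x = (if r \<le> x \<and> x < r + l then r + \<rho> (x - r) else x)" for x
  define s where "s x = (if r \<le> x then e (\<rho> (x - r)) else 1)" for x
  have \<pi>_r: "\<pi> permutes {..<r}" using permutes_subset[OF \<pi>] r_def by auto
  have "sh permutes {..<n}" unfolding sh_def n r_def by (rule permutes_shift[OF \<rho>])
  moreover have "\<pi> permutes {..<n}" using permutes_subset[OF \<pi>] n by auto
  ultimately have \<tau>: "\<pi> \<circ> sh permutes {..<n}" by (rule permutes_compose)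
  have s: "\<forall>x. s x = 1 \<or> s x = -1" using e by (simp add: s_def)
  have \<pi>_lt: "i < k1 \<Longrightarrow> \<pi> i < k1" for i using permutes_in_image[OF \<pi>] by simp
  have \<pi>_fix: "\<not> i < k1 \<Longrightarrow> \<pi> i = i" for i using permutes_not_in[OF \<pi>] by simp
  have \<pi>_eq: "\<pi> i = \<pi> x \<longleftrightarrow> i = x" for i x using permutes_inj[OF \<pi>] by (auto dest: injD)
  have "Gmat k1 k2 (\<lambda>i. A (\<pi> i)) (\<lambda>i j. e (\<rho> j) * B (\<pi> i) (\<rho> j)) (\<lambda>i j. D i (\<rho> j)) i x
      = s x * Gmat k1 k2 A B D (\<pi> i) ((\<pi> \<circ> sh) x)" if i: "i < r" and x: "x < n" for i x
  proof (cases "x < r")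
    case True
    then have "(\<pi> \<circ> sh) x = \<pi> x" "s x = 1" by (simp_all add: sh_def s_def)
    then show ?thesis using True i \<pi>_lt \<pi>_fix \<pi>_eq
      by (cases "i < k1"; cases "x < k1") (auto simp: Gmat_def r_def)
  next
    case False
    have \<tau>x: "(\<pi> \<circ> sh) x = r + \<rho> (x - r)" using False x n \<pi>_fix r_def by (simp add: sh_def)
    have sx: "s x = e (\<rho> (x - r))" using False by (simp add: s_def)
    show ?thesis
    proof (cases "i < k1")
      case True
      then show ?thesis using False \<tau>x sx \<pi>_lt[OF True] by (auto simp: Gmat_def r_def)
    next
      case False2: False
      then show ?thesis using False \<tau>x sx \<pi>_fix[OF False2] e
        by (auto simp: Gmat_def r_def z4_sign_mult_double)
    qed
  qed
  then show ?thesis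
    unfolding r_def[symmetric] by (rule code_equiv_gen_code_signed_permute[OF \<pi>_r \<tau> s])
qed

definition first_unit_row :: "nat \<Rightarrow> nat \<Rightarrow> z4mat \<Rightarrow> nat" where
  "first_unit_row k1 l B = (LEAST i. i < k1 \<and> (\<exists>j<l. B i j \<notin> {0,2}))"

definition column_signs :: "nat \<Rightarrow> nat \<Rightarrow> z4mat \<Rightarrow> nat \<Rightarrow> z4" where
  "column_signs k1 l B j = (if B (first_unit_row k1 l B) j = 3 then -1 else 1)"

lemma column_signs_sign: "column_signs k1 l B j = 1 \<or> column_signs k1 l B j = -1"
  by (simp add: column_signs_def)

lemma in_Bset_column_signs:
  assumes \<rho>: "\<rho> permutes {..<l}"
  shows "in_Bset k1 l (\<lambda>i j. column_signs k1 l B (\<rho> j) * B i (\<rho> j))"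
    (is "in_Bset k1 l ?B")
proof -
  have \<rho>_lt: "j < l \<Longrightarrow> \<rho> j < l" for j using permutes_in_image[OF \<rho>] by simp
  have even_iff: "?B i j \<in> {0,2} \<longleftrightarrow> B i (\<rho> j) \<in> {0,2}" for i j
    using z4_sign_mult_in_02_iff[OF column_signs_sign] .
  show ?thesis
  proof (cases "\<exists>i<k1. \<exists>j<l. B i j \<notin> {0,2}")
    case True
    define i0 where "i0 = first_unit_row k1 l B"
    have i0: "i0 < k1" "\<exists>j<l. B i0 j \<notin> {0,2}"
      using LeastI_ex[of "\<lambda>i. i < k1 \<and> (\<exists>j<l. B i j \<notin> {0,2})"] True
      by (auto simp: i0_def first_unit_row_def)
    have before_i0: "B i j \<in> {0,2}" if "i < i0" "j < l" for i j
      using not_less_Least[of i "\<lambda>i. i < k1 \<and> (\<exists>j<l. B i j \<notin> {0,2})"] that i0(1)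
      by (auto simp: i0_def first_unit_row_def)
    obtain j0 where j0: "j0 < l" "B i0 j0 \<notin> {0,2}" using i0(2) by blast
    have "inv \<rho> j0 < l" "\<rho> (inv \<rho> j0) = j0"
      using permutes_in_image[OF permutes_inv[OF \<rho>]] permutes_inverses(1)[OF \<rho>] j0(1) by auto
    then have "\<exists>j<l. ?B i0 j \<notin> {0,2}" using j0(2) even_iff by metis
    moreover have "?B i0 j \<in> {0,1,2}" for j
      unfolding column_signs_def i0_def[symmetric] by (rule z4_sign_normalise)
    ultimately show ?thesis
      unfolding in_Bset_def using i0(1) before_i0 \<rho>_lt even_iff by blast
  next
    case False
    then show ?thesis using \<rho>_lt even_iff by (auto simp: in_Bset_def mat_over_def)
  qed
qed

lemma in_V_representative_exists:
  assumes S: "in_S k1 k2 l A0 B0 D0" and n: "n = k1 + k2 + l"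
  shows "\<exists>A B D. in_V k1 k2 l A B D
    \<and> code_equiv n (gen_code (k1 + k2) n (Gmat k1 k2 A0 B0 D0))
                   (gen_code (k1 + k2) n (Gmat k1 k2 A B D))"
proof -
  obtain \<pi> where \<pi>: "\<pi> permutes {..<k1}"
    "\<forall>i<k1. \<forall>j<k1. i \<le> j \<longrightarrow> map (A0 (\<pi> i)) [0..<k2] \<le> map (A0 (\<pi> j)) [0..<k2]"
    using sorting_permutation_exists[of k1 "\<lambda>i. map (A0 i) [0..<k2]"] by auto
  define B1 where "B1 i j = B0 (\<pi> i) j" for i j
  define e where "e = column_signs k1 l B1"
  define M where "M = stackBD k1 (\<lambda>i j. e j * B1 i j) D0"
  obtain \<rho> where \<rho>: "\<rho> permutes {..<l}"
    "\<forall>i<l. \<forall>j<l. i \<le> j \<longrightarrow>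
       map (\<lambda>q. M q (\<rho> i)) [0..<k1 + k2] \<le> map (\<lambda>q. M q (\<rho> j)) [0..<k1 + k2]"
    using sorting_permutation_exists[of l "\<lambda>j. map (\<lambda>q. M q j) [0..<k1 + k2]"] by auto
  define A where "A = (\<lambda>i. A0 (\<pi> i))"
  define B where "B = (\<lambda>i j. e (\<rho> j) * B0 (\<pi> i) (\<rho> j))"
  define D where "D = (\<lambda>i j. D0 i (\<rho> j))"
  have "in_S k1 k2 l A B D"
    using S permutes_in_image[OF \<pi>(1)] permutes_in_image[OF \<rho>(1)]
    by (auto simp: in_S_def mat_over_def A_def D_def)
  moreover have "P_row k1 k2 A"
    unfolding P_row_def A_def using \<pi>(2) lex_le_if_map_le by blast
  moreover have "in_Bset k1 l B"
    using in_Bset_column_signs[OF \<rho>(1), of k1 B1] by (simp add: B_def B1_def e_def)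
  moreover have "stackBD k1 B D = (\<lambda>q j. M q (\<rho> j))"
    by (auto simp: fun_eq_iff stackBD_def M_def B_def B1_def D_def)
  then have "P_col (k1 + k2) l (stackBD k1 B D)"
    unfolding P_col_def using \<rho>(2) lex_le_if_map_le by simp
  moreover have "code_equiv n (gen_code (k1 + k2) n (Gmat k1 k2 A0 B0 D0))
      (gen_code (k1 + k2) n (Gmat k1 k2 A B D))"
    unfolding A_def B_def D_def
    by (rule code_equiv_Gmat_reorder[OF n \<pi>(1) \<rho>(1)]) (simp add: e_def column_signs_sign)
  ultimately show ?thesis by (auto simp: in_V_def in_U_def in_T_def)
qed

text \<open>A zero column of (B; 2D), swapped to the last position, leaves the code generated by
  the remaining columns padded with a zero coordinate.\<close>

lemma trivial_ext_equiv_if_zero_column: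
  fixes k1 k2 l n :: nat
  assumes n: "n = k1 + k2 + l" and j: "j < l" and S: "in_S k1 k2 l A B D"
    and zero: "\<forall>i<k1 + k2. stackBD k1 B D i j = 0"
  shows "\<exists>C0. is_code (n - 1) C0 \<and> has_type (n - 1) k1 k2 C0
     \<and> code_equiv n (gen_code (k1 + k2) n (Gmat k1 k2 A B D)) (trivial_ext n C0)"
proof -
  define t where "t = Transposition.transpose j (l - 1)"
  define G where "G = Gmat k1 k2 A (\<lambda>i x. B i (t x)) (\<lambda>i x. D i (t x))"
  define C0 where "C0 = gen_code (k1 + k2) (n - 1) G"
  have t: "t permutes {..<l}" unfolding t_def using j by (intro permutes_swap_id) auto
  have "code_equiv n (gen_code (k1 + k2) n (Gmat k1 k2 A B D)) (gen_code (k1 + k2) n G)"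
    using code_equiv_Gmat_reorder[OF n permutes_id t, of "\<lambda>_. 1" A B D] by (simp add: G_def)
  moreover have "gen_code (k1 + k2) n G = C0"
  proof -
    have "t (l - 1) = j" by (simp add: t_def)
    then have "G i (n - 1) = 0" if "i < k1 + k2" for i
      using zero that j n by (auto simp: G_def Gmat_def stackBD_def)
    then have "gen_code (k1 + k2) n G
        = gen_code (k1 + k2) n (\<lambda>i x. if x < n - 1 then G i x else 0)"
      by (intro gen_code_cong) (metis Suc_pred' less_Suc_eq less_nat_zero_code not_gr_zero)
    then show ?thesis unfolding C0_def using gen_code_pad_zero_columns[of "n - 1" n] by simp
  qed
  moreover have "is_code (n - 1) C0" unfolding C0_def by (rule is_code_gen_code)
  moreover have "has_type (n - 1) k1 k2 C0"
  proof -
    have "in_S k1 k2 (l - 1) A (\<lambda>i x. B i (t x)) (\<lambda>i x. D i (t x))"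
      using S j by (auto simp: in_S_def mat_over_def t_def transpose_def)
    then show ?thesis unfolding C0_def G_def using n j
      by (intro has_type_gen_code_Gmat) (auto simp: diff_diff_add)
  qed
  ultimately show ?thesis using trivial_ext_code by metis
qed

theorem mainTheorem12:
  fixes n k1 k2 l :: nat and C :: "z4vec set"
  assumes "k1 + k2 \<le> n"
    and "l = n - k1 - k2"
    and "is_code n C"
    and "has_type n k1 k2 C"
    and "\<not> (\<exists>C0. is_code (n - 1) C0 \<and> has_type (n - 1) k1 k2 C0
                  \<and> code_equiv n C (trivial_ext n C0))"
  shows "\<exists>C' A B D. is_code n C' \<and> has_type n k1 k2 C' \<and> code_equiv n C C'
           \<and> in_V k1 k2 l A B D
           \<and> C' = gen_code (k1 + k2) n (Gmat k1 k2 A B D)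
           \<and> (\<forall>j<l. \<exists>i<k1 + k2. stackBD k1 B D i j \<noteq> 0)"
proof -
  have n: "n = k1 + k2 + l" using assms(1,2) by simp
  obtain A0 B0 D0 where S0: "in_S k1 k2 l A0 B0 D0"
    and "perm_equiv n (gen_code (k1 + k2) n (Gmat k1 k2 A0 B0 D0)) C"
    using assms(2,4) by (auto simp: has_type_def)
  then have C_equiv: "code_equiv n C (gen_code (k1 + k2) n (Gmat k1 k2 A0 B0 D0))"
    by (blast intro: code_equiv_if_perm_equiv perm_equiv_sym)
  obtain A B D where V: "in_V k1 k2 l A B D"
    and reduced: "code_equiv n (gen_code (k1 + k2) n (Gmat k1 k2 A0 B0 D0))
                      (gen_code (k1 + k2) n (Gmat k1 k2 A B D))"
    using in_V_representative_exists[OF S0 n] by blast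
  have equiv: "code_equiv n C (gen_code (k1 + k2) n (Gmat k1 k2 A B D))"
    using code_equiv_trans[OF C_equiv reduced] .
  have S: "in_S k1 k2 l A B D" using V by (simp add: in_V_def in_U_def in_T_def)
  have "\<forall>j<l. \<exists>i<k1 + k2. stackBD k1 B D i j \<noteq> 0"
    using trivial_ext_equiv_if_zero_column[OF n _ S] code_equiv_trans[OF equiv] assms(5)
    by blast
  then show ?thesis
    using is_code_gen_code has_type_gen_code_Gmat[OF assms(1)] S assms(2) equiv V by blast
qed

end
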